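(* Let $\mathcal{G}$ be a signed digraph with signed Laplacian $L$. (1) If $L$ has corank $1$, then $\mathcal{G}$ has a rooted spanning tree. (2) If $-L$ is EEP, or if $L$ is weight balanced and of corank $1$, then $L$ is irreducible (equivalently, $\mathcal{G}$ is strongly connected).
   Context: A signed digraph is $\mathcal{G}=(\mathcal{V},\mathcal{E},A)$ with $\mathcal{V}=\{1,\dots,n\}$, real weighted adjacency matrix $A$ (entries of any sign), and $A_{ij}\neq0$ iff $(j,i)\in\mathcal{E}$ is a directed edge from $j$ to $i$. Its signed Laplacian is $L=\Sigma-A$ with $\Sigma=\mathrm{diag}(\sigma_i)$, $\sigma_i=\sum_jA_{ij}$. $\mathcal{G}$ has a rooted spanning tree if there is a node $j$ from which every node can be reached by a directed path of edges in $\mathcal{E}$; $\mathcal{G}$ is strongly connected if every node can be reached from every other node. $L$ is irreducible if there is no permutation matrix $P$ with $P^\top LP$ block upper triangular with two nontrivial square diagonal blocks. Weight balanced means $L^\top\mathbf{1}=0$. $M$ is EEP if there is $t_0\ge0$ with $e^{Mt}$ entrywise positive for all $t\ge t_0$. Corank means dimension of the kernel. *)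

theory Defs
  imports "HOL-Analysis.Analysis"
begin

definition edges :: "real^'n^'n \<Rightarrow> ('n \<times> 'n) set" where
  "edges A = {(j, i). A $ i $ j \<noteq> 0}"

definition signed_laplacian :: "real^'n^'n \<Rightarrow> real^'n^'n" where
  "signed_laplacian A = (\<chi> i j. (if i = j then (\<Sum>k\<in>UNIV. A $ i $ k) else 0) - A $ i $ j)"

definition has_rooted_spanning_tree :: "real^'n^'n \<Rightarrow> bool" where
  "has_rooted_spanning_tree A \<longleftrightarrow> (\<exists>r. \<forall>v. (r, v) \<in> (edges A)\<^sup>*)"

definition strongly_connected :: "real^'n^'n \<Rightarrow> bool" where
  "strongly_connected A \<longleftrightarrow> (\<forall>u v. (u, v) \<in> (edges A)\<^sup>*)"

definition corank :: "real^'n^'n \<Rightarrow> nat" where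
  "corank M = dim {x. M *v x = 0}"

definition weight_balanced :: "real^'n^'n \<Rightarrow> bool" where
  "weight_balanced L \<longleftrightarrow> transpose L *v (\<chi> i. 1) = 0"

definition perm_matrix :: "('n \<Rightarrow> 'n) \<Rightarrow> real^'n^'n" where
  "perm_matrix p = (\<chi> i j. if i = p j then 1 else 0)"

text \<open>Block upper triangular w.r.t. the index order, with two nontrivial square diagonal
  blocks: the first block is indexed by a nonempty proper initial segment S of the
  (linearly ordered) index type, and the lower-left block (rows outside S, columns in S) is zero.\<close>
definition block_upper_triangular :: "real^('n::{finite,linorder})^('n::{finite,linorder}) \<Rightarrow> bool" where
  "block_upper_triangular M \<longleftrightarrow>
     (\<exists>S. S \<noteq> {} \<and> S \<noteq> UNIV \<and> (\<forall>i j. j \<in> S \<longrightarrow> i \<le> j \<longrightarrow> i \<in> S) \<and>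
          (\<forall>i j. i \<notin> S \<longrightarrow> j \<in> S \<longrightarrow> M $ i $ j = 0))"

definition irreducible_matrix :: "real^('n::{finite,linorder})^('n::{finite,linorder}) \<Rightarrow> bool" where
  "irreducible_matrix L \<longleftrightarrow>
     \<not> (\<exists>p. p permutes UNIV \<and>
            block_upper_triangular (transpose (perm_matrix p) ** L ** perm_matrix p))"

primrec matpow :: "real^'n^'n \<Rightarrow> nat \<Rightarrow> real^'n^'n" where
  "matpow M 0 = mat 1"
| "matpow M (Suc k) = M ** matpow M k"

definition mat_exp :: "real^'n^'n \<Rightarrow> real^'n^'n" where
  "mat_exp M = (\<chi> i j. \<Sum>k. matpow M k $ i $ j / fact k)"

definition EEP :: "real^'n^'n \<Rightarrow> bool" where
  "EEP M \<longleftrightarrow> (\<exists>t0\<ge>0. \<forall>t\<ge>t0. \<forall>i j. mat_exp (t *\<^sub>R M) $ i $ j > 0)"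

end

theory Submission
  imports Defs
begin

text \<open>Call a node set \<open>T\<close> closed for a matrix \<open>M\<close> if rows in \<open>T\<close> vanish outside \<open>T\<close>; for the
  Laplacian this says that no edge enters \<open>T\<close>. A Laplacian has zero row sums, so its rows indexed
  by a nonempty closed \<open>T\<close> span at most \<open>card T - 1\<close> dimensions. Without a rooted spanning tree
  there are two disjoint nonempty closed sets (the ancestor sets of a node with fewest ancestors
  and of a node it cannot reach), which forces \<open>rank L \<le> n - 2\<close>; with zero column sums one
  nonempty proper closed set suffices, because one row outside it is minus the sum of the
  others. Closed sets survive matrix products, so an EEP matrix has none besides \<open>{}\<close> and
  \<open>UNIV\<close>, and they are exactly what a block triangular permutation of \<open>L\<close> exhibits.\<close>

definition block_closed :: "real^'n^'n \<Rightarrow> 'n set \<Rightarrow> bool" where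
  "block_closed M T \<longleftrightarrow> (\<forall>i j. i \<in> T \<longrightarrow> j \<notin> T \<longrightarrow> M $ i $ j = 0)"

definition zero_sum_basis :: "'n \<Rightarrow> 'n set \<Rightarrow> (real^'n) set" where
  "zero_sum_basis a T = (\<lambda>j. axis j 1 - axis a 1) ` (T - {a})"

subsection \<open>Rank and corank\<close>

lemma corank_plus_rank:
  fixes M :: "real^'n^'n"
  shows "corank M + rank M = CARD('n)"
proof -
  have orth: "{y. \<forall>x\<in>span (rows M). orthogonal x y} = {y. M *v y = 0}"
  proof (intro set_eqI iffI)
    fix y assume "y \<in> {y. \<forall>x\<in>span (rows M). orthogonal x y}"
    then have "orthogonal (M $ k) y" for k
      by (auto intro: span_base simp: rows_def row_def vec_lambda_eta)
    then show "y \<in> {y. M *v y = 0}"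
      by (simp add: vec_eq_iff matrix_vector_mul_component orthogonal_def)
  next
    fix y assume "y \<in> {y. M *v y = 0}"
    then show "y \<in> {y. \<forall>x\<in>span (rows M). orthogonal x y}"
      using orthogonal_nullspace_rowspace orthogonal_commute by blast
  qed
  have "dim {y \<in> UNIV. \<forall>x\<in>span (rows M). orthogonal x y} + dim (span (rows M))
      = dim (UNIV :: (real^'n) set)"
    by (rule dim_subspace_orthogonal_to_vectors) auto
  then show ?thesis
    using orth by (simp add: corank_def row_rank_def)
qed

lemma rank_le_card_spanning_set:
  fixes M :: "real^'n^'m"
  assumes "finite B" and "\<And>i. M $ i \<in> span B"
  shows "rank M \<le> card B"
  unfolding row_rank_def
  by (rule dim_le_card) (use assms in \<open>auto simp: rows_def row_def vec_lambda_eta\<close>)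

lemma card_zero_sum_basis:
  assumes "a \<in> T"
  shows "card (zero_sum_basis a (T :: 'n::finite set)) + 1 \<le> card T"
proof -
  have "card (zero_sum_basis a T) \<le> card (T - {a})"
    unfolding zero_sum_basis_def by (rule card_image_le) simp
  moreover have "card T > 0"
    using assms by (auto simp: card_gt_0_iff)
  ultimately show ?thesis
    using assms by simp
qed

lemma zero_sum_in_span_basis:
  fixes x :: "real^'n"
  assumes a: "a \<in> T" and supp: "\<And>j. j \<notin> T \<Longrightarrow> x $ j = 0" and sum: "(\<Sum>j\<in>UNIV. x $ j) = 0"
  shows "x \<in> span (zero_sum_basis a T)"
proof -
  have "(\<Sum>j\<in>UNIV. x $ j) = (\<Sum>j\<in>T. x $ j)"
    by (rule sum.mono_neutral_right) (auto simp: supp)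
  then have "(\<Sum>j\<in>T - {a}. x $ j) = - x $ a"
    using sum a by (simp add: sum.remove)
  then have "x = (\<Sum>j\<in>T - {a}. x $ j *\<^sub>R (axis j 1 - axis a 1))"
    unfolding vec_eq_iff
  proof (intro allI)
    fix i
    have "(\<Sum>j\<in>T - {a}. x $ j *\<^sub>R (axis j 1 - axis a 1)) $ i
        = (\<Sum>j\<in>T - {a}. if i = j then x $ j else 0) - (if i = a then \<Sum>j\<in>T - {a}. x $ j else 0)"
      by (simp add: sum_component axis_def sum_subtractf right_diff_distrib if_distrib[of "(*) _"]
          cong: if_cong)
    also have "\<dots> = x $ i"
      using \<open>(\<Sum>j\<in>T - {a}. x $ j) = - x $ a\<close> a supp by (cases "i = a") (auto simp: sum.delta)
    finally show "x $ i = (\<Sum>j\<in>T - {a}. x $ j *\<^sub>R (axis j 1 - axis a 1)) $ i" ..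
  qed
  also have "\<dots> \<in> span (zero_sum_basis a T)"
    unfolding zero_sum_basis_def by (intro span_sum span_scale span_base) auto
  finally show ?thesis .
qed

lemma block_closed_row_in_span:
  fixes M :: "real^'n^'n"
  assumes "block_closed M T" and "a \<in> T" and "i \<in> T" and "(\<Sum>j\<in>UNIV. M $ i $ j) = 0"
  shows "M $ i \<in> span (zero_sum_basis a T)"
  using assms by (intro zero_sum_in_span_basis) (auto simp: block_closed_def)

lemma card_Compl: "card (- X) = CARD('n::finite) - card (X :: 'n set)"
  by (simp add: Compl_eq_Diff_UNIV card_Diff_subset)

lemma rank_two_disjoint_closed_blocks:
  fixes M :: "real^'n^'n"
  assumes row_sums: "\<And>i. (\<Sum>j\<in>UNIV. M $ i $ j) = 0"
    and T1: "block_closed M T1" "T1 \<noteq> {}" and T2: "block_closed M T2" "T2 \<noteq> {}"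
    and disjoint: "T1 \<inter> T2 = {}"
  shows "rank M + 2 \<le> CARD('n)"
proof -
  obtain a1 a2 where a: "a1 \<in> T1" "a2 \<in> T2"
    using T1 T2 by blast
  define B where "B = zero_sum_basis a1 T1 \<union> zero_sum_basis a2 T2 \<union> (\<lambda>i. M $ i) ` (- (T1 \<union> T2))"
  have "span (zero_sum_basis a1 T1) \<subseteq> span B" "span (zero_sum_basis a2 T2) \<subseteq> span B"
    by (auto simp: B_def intro!: span_mono)
  then have "M $ i \<in> span B" for i
    using block_closed_row_in_span[OF T1(1) a(1) _ row_sums]
      block_closed_row_in_span[OF T2(1) a(2) _ row_sums]
    by (cases "i \<in> T1 \<union> T2") (auto simp: B_def intro: span_base)
  then have "rank M \<le> card B"
    by (intro rank_le_card_spanning_set) (simp_all add: B_def zero_sum_basis_def)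
  also have "\<dots> \<le> card (zero_sum_basis a1 T1) + card (zero_sum_basis a2 T2) + card (- (T1 \<union> T2))"
    unfolding B_def by (intro card_Un_le[THEN order_trans] add_mono card_image_le card_Un_le) auto
  finally show ?thesis
    using card_zero_sum_basis[OF a(1)] card_zero_sum_basis[OF a(2)] card_Compl[of "T1 \<union> T2"]
      card_Un_disjoint[OF _ _ disjoint] card_mono[of UNIV "T1 \<union> T2"] by simp
qed

lemma rank_closed_block_zero_col_sums:
  fixes M :: "real^'n^'n"
  assumes row_sums: "\<And>i. (\<Sum>j\<in>UNIV. M $ i $ j) = 0"
    and col_sums: "\<And>j. (\<Sum>i\<in>UNIV. M $ i $ j) = 0"
    and T: "block_closed M T" "T \<noteq> {}" "T \<noteq> UNIV"
  shows "rank M + 2 \<le> CARD('n)"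
proof -
  obtain a s where a: "a \<in> T" and s: "s \<notin> T"
    using T by blast
  define B where "B = zero_sum_basis a T \<union> (\<lambda>i. M $ i) ` (- (T \<union> {s}))"
  have "span (zero_sum_basis a T) \<subseteq> span B"
    by (auto simp: B_def intro!: span_mono)
  then have other_rows: "M $ i \<in> span B" if "i \<noteq> s" for i
    using block_closed_row_in_span[OF T(1) a _ row_sums] that
    by (cases "i \<in> T") (auto simp: B_def intro: span_base)
  have "(\<Sum>i\<in>UNIV. M $ i) = 0"
    by (simp add: vec_eq_iff sum_component col_sums)
  then have "M $ s = - (\<Sum>i\<in>UNIV - {s}. M $ i)"
    by (simp add: sum.remove eq_neg_iff_add_eq_0)
  also have "\<dots> \<in> span B"
    by (intro span_neg span_sum other_rows) simp
  finally have "M $ i \<in> span B" for i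
    using other_rows by (cases "i = s") simp_all
  then have "rank M \<le> card B"
    by (intro rank_le_card_spanning_set) (simp_all add: B_def zero_sum_basis_def)
  also have "\<dots> \<le> card (zero_sum_basis a T) + card (- (T \<union> {s}))"
    unfolding B_def by (intro card_Un_le[THEN order_trans] add_mono card_image_le) auto
  finally show ?thesis
    using card_zero_sum_basis[OF a] card_Compl[of "T \<union> {s}"] s card_mono[of UNIV "T \<union> {s}"]
    by simp
qed

subsection \<open>Closed sets of the signed Laplacian\<close>

definition ancestors :: "real^'n^'n \<Rightarrow> 'n \<Rightarrow> 'n set" where
  "ancestors A v = {u. (u, v) \<in> (edges A)\<^sup>*}"

lemma signed_laplacian_row_sum: "(\<Sum>j\<in>UNIV. signed_laplacian A $ i $ j) = 0"
  by (simp add: signed_laplacian_def sum_subtractf)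

lemma block_closed_signed_laplacian_iff:
  "block_closed (signed_laplacian A) T \<longleftrightarrow> (\<forall>i j. i \<in> T \<longrightarrow> j \<notin> T \<longrightarrow> (j, i) \<notin> edges A)"
  by (auto simp: block_closed_def signed_laplacian_def edges_def)

lemma block_closed_ancestors: "block_closed (signed_laplacian A) (ancestors A v)"
  unfolding block_closed_signed_laplacian_iff ancestors_def
  by (blast intro: converse_rtrancl_into_rtrancl)

lemma ancestors_subset_block_closed:
  assumes "block_closed (signed_laplacian A) T" and "v \<in> T"
  shows "ancestors A v \<subseteq> T"
proof
  fix u assume "u \<in> ancestors A v"
  then have "(u, v) \<in> (edges A)\<^sup>*"
    by (simp add: ancestors_def)
  then show "u \<in> T"
    using assms by (induction rule: converse_rtrancl_induct)
      (auto simp: block_closed_signed_laplacian_iff)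
qed

lemma strongly_connected_iff_no_proper_closed_block:
  "strongly_connected A \<longleftrightarrow>
     (\<forall>T. block_closed (signed_laplacian A) T \<longrightarrow> T = {} \<or> T = UNIV)"
proof
  assume "strongly_connected A"
  then have "ancestors A v = UNIV" for v
    by (simp add: strongly_connected_def ancestors_def)
  then show "\<forall>T. block_closed (signed_laplacian A) T \<longrightarrow> T = {} \<or> T = UNIV"
    using ancestors_subset_block_closed by blast
next
  assume no_proper: "\<forall>T. block_closed (signed_laplacian A) T \<longrightarrow> T = {} \<or> T = UNIV"
  have "v \<in> ancestors A v" for v
    by (simp add: ancestors_def)
  then have "ancestors A v = UNIV" for v
    using no_proper block_closed_ancestors by blast
  then show "strongly_connected A"
    by (auto simp: strongly_connected_def ancestors_def)
qed

lemma corank_one_imp_rooted_spanning_tree: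
  fixes A :: "real^'n^'n"
  assumes "corank (signed_laplacian A) = 1"
  shows "has_rooted_spanning_tree A"
proof (rule ccontr)
  assume no_root: "\<not> has_rooted_spanning_tree A"
  obtain v where v_min: "\<And>w. card (ancestors A v) \<le> card (ancestors A w)"
    using ex_has_least_nat[of "\<lambda>_. True" undefined "\<lambda>w. card (ancestors A w)"] by auto
  have v_ancestor: "v \<in> ancestors A u" if "u \<in> ancestors A v" for u
  proof -
    have "ancestors A u \<subseteq> ancestors A v"
      using that by (auto simp: ancestors_def)
    then have "ancestors A u = ancestors A v"
      using v_min[of u] by (meson card_mono card_subset_eq finite le_antisym)
    then show ?thesis
      by (simp add: ancestors_def)
  qed
  obtain w where w: "(v, w) \<notin> (edges A)\<^sup>*"
    using no_root by (auto simp: has_rooted_spanning_tree_def)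
  have "ancestors A v \<inter> ancestors A w = {}"
    using w v_ancestor by (auto simp: ancestors_def intro: rtrancl_trans)
  moreover have "v \<in> ancestors A v" "w \<in> ancestors A w"
    by (simp_all add: ancestors_def)
  ultimately have "rank (signed_laplacian A) + 2 \<le> CARD('n)"
    by (intro rank_two_disjoint_closed_blocks signed_laplacian_row_sum) (auto intro: block_closed_ancestors)
  then show False
    using corank_plus_rank[of "signed_laplacian A"] assms by simp
qed

lemma weight_balanced_corank_one_imp_strongly_connected:
  fixes A :: "real^'n^'n"
  assumes wb: "weight_balanced (signed_laplacian A)" and corank: "corank (signed_laplacian A) = 1"
  shows "strongly_connected A"
  unfolding strongly_connected_iff_no_proper_closed_block
proof (intro allI impI; rule ccontr)
  fix T assume "block_closed (signed_laplacian A) T" "\<not> (T = {} \<or> T = UNIV)"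
  moreover have "(\<Sum>i\<in>UNIV. signed_laplacian A $ i $ j) = 0" for j
    using wb by (simp add: weight_balanced_def vec_eq_iff matrix_vector_mult_def transpose_def)
  ultimately have "rank (signed_laplacian A) + 2 \<le> CARD('n)"
    by (intro rank_closed_block_zero_col_sums signed_laplacian_row_sum) auto
  then show False
    using corank_plus_rank[of "signed_laplacian A"] corank by simp
qed

subsection \<open>The matrix exponential\<close>

lemma block_closed_uminus [simp]: "block_closed (- M) T \<longleftrightarrow> block_closed M T"
  by (simp add: block_closed_def)

lemma block_closed_scaleR: "block_closed M T \<Longrightarrow> block_closed (c *\<^sub>R M) T"
  by (simp add: block_closed_def)

lemma block_closed_mult:
  assumes "block_closed M T" and "block_closed N T"
  shows "block_closed (M ** N) T"
  unfolding block_closed_def matrix_matrix_mult_def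
proof (intro allI impI)
  fix i j assume "i \<in> T" "j \<notin> T"
  then have "M $ i $ k * N $ k $ j = 0" for k
    using assms by (cases "k \<in> T") (auto simp: block_closed_def)
  then show "(\<chi> i j. \<Sum>k\<in>UNIV. M $ i $ k * N $ k $ j) $ i $ j = 0"
    by (simp add: sum.neutral)
qed

lemma block_closed_matpow: "block_closed M T \<Longrightarrow> block_closed (matpow M k) T"
proof (induction k)
  case 0
  show ?case
    by (simp add: block_closed_def mat_def)
next
  case (Suc k)
  then show ?case
    by (simp add: block_closed_mult)
qed

lemma block_closed_mat_exp:
  assumes "block_closed M T"
  shows "block_closed (mat_exp M) T"
  unfolding block_closed_def
proof (intro allI impI)
  fix i j assume "i \<in> T" "j \<notin> T"
  then have "matpow M k $ i $ j = 0" for k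
    using block_closed_matpow[OF assms] by (simp add: block_closed_def)
  then show "mat_exp M $ i $ j = 0"
    by (simp add: mat_exp_def)
qed

lemma EEP_imp_no_proper_closed_block:
  assumes "EEP M" and "block_closed M T"
  shows "T = {} \<or> T = UNIV"
proof -
  obtain t where positive: "\<And>i j. mat_exp (t *\<^sub>R M) $ i $ j > 0"
    using assms(1) unfolding EEP_def by blast
  have "block_closed (mat_exp (t *\<^sub>R M)) T"
    using assms(2) by (intro block_closed_mat_exp block_closed_scaleR)
  then have "i \<notin> T \<or> j \<in> T" for i j
    using positive[of i j] unfolding block_closed_def by (metis less_irrefl)
  then show ?thesis
    by blast
qed

subsection \<open>Irreducibility\<close>

lemma permuted_matrix_entry:
  "(transpose (perm_matrix p) ** M ** perm_matrix p) $ i $ j = M $ p i $ p j"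
proof -
  have "\<And>P (x::real). (if P then 1 else 0) * x = (if P then x else 0)"
    "\<And>P (x::real). x * (if P then 1 else 0) = (if P then x else 0)"
    by simp_all
  then show ?thesis
    by (simp add: matrix_matrix_mult_def transpose_def perm_matrix_def)
qed

lemma block_upper_triangular_permuted_imp_proper_closed_block:
  assumes p: "p permutes UNIV"
    and "block_upper_triangular (transpose (perm_matrix p) ** M ** perm_matrix p)"
  shows "\<exists>T. block_closed M T \<and> T \<noteq> {} \<and> T \<noteq> UNIV"
proof -
  obtain S where S: "S \<noteq> {}" "S \<noteq> UNIV"
    and lower_left: "\<And>i j. i \<notin> S \<Longrightarrow> j \<in> S \<Longrightarrow> M $ p i $ p j = 0"
    using assms(2) unfolding block_upper_triangular_def permuted_matrix_entry by blast
  have "block_closed M (p ` (- S))"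
    unfolding block_closed_def
  proof (intro allI impI)
    fix i j assume "i \<in> p ` (- S)" "j \<notin> p ` (- S)"
    moreover obtain k where "j = p k"
      using permutes_surj[OF p] by (metis surjD)
    ultimately show "M $ i $ j = 0"
      using lower_left by auto
  qed
  moreover have "p ` (- S) \<noteq> {}"
    using S(2) by auto
  moreover have "p ` (- S) \<noteq> UNIV"
  proof -
    obtain s where "s \<in> S"
      using S(1) by blast
    then have "p s \<notin> p ` (- S)"
      by (simp add: inj_image_mem_iff[OF permutes_inj[OF p]])
    then show ?thesis
      by blast
  qed
  ultimately show ?thesis
    by blast
qed

lemma irreducible_if_no_proper_closed_block:
  assumes "\<And>T. block_closed M T \<Longrightarrow> T = {} \<or> T = UNIV"
  shows "irreducible_matrix M"
  using assms block_upper_triangular_permuted_imp_proper_closed_block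
  unfolding irreducible_matrix_def by blast

theorem lemma5:
  fixes A :: "real^('n::{finite,linorder})^('n::{finite,linorder})"
  defines "L \<equiv> signed_laplacian A"
  shows "(corank L = 1 \<longrightarrow> has_rooted_spanning_tree A)
    \<and> ((EEP (- L) \<or> (weight_balanced L \<and> corank L = 1)) \<longrightarrow>
         irreducible_matrix L \<and> strongly_connected A)"
proof (intro conjI impI)
  show "has_rooted_spanning_tree A" if "corank L = 1"
    using that corank_one_imp_rooted_spanning_tree unfolding L_def by blast
  assume "EEP (- L) \<or> (weight_balanced L \<and> corank L = 1)"
  then show sc: "strongly_connected A"
  proof
    assume "EEP (- L)"
    then show ?thesis
      unfolding strongly_connected_iff_no_proper_closed_block L_def
      using EEP_imp_no_proper_closed_block[of "- signed_laplacian A"] by simp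
  next
    assume "weight_balanced L \<and> corank L = 1"
    then show ?thesis
      unfolding L_def by (blast intro: weight_balanced_corank_one_imp_strongly_connected)
  qed
  then show "irreducible_matrix L"
    unfolding L_def strongly_connected_iff_no_proper_closed_block
    by (blast intro: irreducible_if_no_proper_closed_block)
qed

end
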